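(* Let $n>2$. If $n$ is odd, the Gale dual of $P(D_n)$ is (up to linear change of coordinates) a vector configuration in $\mathbb{R}$ consisting of $n$ copies of each of the vectors $1$ and $-1$. If $n=2m$ is even, the Gale dual of $P(D_n)$ is (up to linear change of coordinates) the vector configuration in $\mathbb{R}^2$ consisting of $m$ copies of each of the four vectors $[\pm1,0]^T$, $[0,\pm1]^T$.
   Context: Each $g\in S_n$ is identified with its $n\times n$ permutation matrix (entry $(i,j)$ is $1$ iff $g(i)=j$); $P(G)=\mathrm{conv}\{g:g\in G\}$. $D_n\le S_n$ is generated by $r=(1\ 2\ \cdots\ n)$ and $f=(1\ n)(2\ n-1)\cdots(\lfloor\frac{n+1}{2}\rfloor\ \lceil\frac{n+1}{2}\rceil)$. For a polytope with vertices $v_1,\dots,v_r$ and dimension $d$, its Gale dual is the configuration of columns $\overline{v}_1,\dots,\overline{v}_r\in\mathbb{R}^{r-d-1}$ of a matrix whose rows form a basis of the space of linear dependences $\{\lambda\in\mathbb{R}^r:\sum\lambda_iv_i=0\}$; it is unique up to linear change of coordinates. *)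

theory Defs
  imports "HOL-Analysis.Analysis"
begin

text \<open>Permutations of {1..n} are represented as functions nat \<Rightarrow> nat fixing every
  point outside {1..n}.\<close>

definition rot :: "nat \<Rightarrow> nat \<Rightarrow> nat" where
  "rot n i = (if 1 \<le> i \<and> i \<le> n then i mod n + 1 else i)"

definition flip :: "nat \<Rightarrow> nat \<Rightarrow> nat" where
  "flip n i = (if 1 \<le> i \<and> i \<le> n then n + 1 - i else i)"

inductive_set dihedral :: "nat \<Rightarrow> (nat \<Rightarrow> nat) set" for n :: nat where
  id_in: "id \<in> dihedral n"
| rot_in: "rot n \<in> dihedral n"
| flip_in: "flip n \<in> dihedral n"
| comp_in: "g \<in> dihedral n \<Longrightarrow> h \<in> dihedral n \<Longrightarrow> g \<circ> h \<in> dihedral n"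
| inv_in: "g \<in> dihedral n \<Longrightarrow> inv g \<in> dihedral n"

definition perm_entry :: "(nat \<Rightarrow> nat) \<Rightarrow> nat \<Rightarrow> nat \<Rightarrow> real" where
  "perm_entry g i j = (if g i = j then 1 else 0)"

text \<open>The space of linear dependences among the vertices (the permutation matrices
  of the elements of D_n) of P(D_n), as real functions on D_n (zero outside D_n).\<close>
definition dependences :: "nat \<Rightarrow> ((nat \<Rightarrow> nat) \<Rightarrow> real) set" where
  "dependences n = {lam. (\<forall>g. g \<notin> dihedral n \<longrightarrow> lam g = 0) \<and>
      (\<forall>i\<in>{1..n}. \<forall>j\<in>{1..n}. (\<Sum>g\<in>dihedral n. lam g * perm_entry g i j) = 0)}"

end

theory Submission
  imports Defs
begin

text \<open>Number the points \<open>1..n\<close> by the residues \<open>x = i - 1\<close> modulo \<open>n\<close>. Then \<open>D\<^sub>n\<close>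
  consists of the \<open>2n\<close> maps \<open>\<rho>\<^sub>k : x \<mapsto> x + k\<close> and \<open>\<sigma>\<^sub>k : x \<mapsto> k - x\<close>, and entry \<open>(i, j)\<close> of
  \<open>\<Sum> \<lambda>\<^sub>g g\<close> is \<open>\<lambda>(\<rho>\<^sub>y\<^sub>-\<^sub>x) + \<lambda>(\<sigma>\<^sub>x\<^sub>+\<^sub>y)\<close> for \<open>x = i - 1\<close>, \<open>y = j - 1\<close>. Hence \<open>\<lambda>\<close> is a
  dependence iff \<open>\<lambda>(\<rho>\<^sub>y\<^sub>-\<^sub>x) = -\<lambda>(\<sigma>\<^sub>x\<^sub>+\<^sub>y)\<close> for all integers \<open>x, y\<close>; in particular
  \<open>\<lambda>(\<sigma>\<^sub>k) = -\<lambda>(\<rho>\<^sub>k)\<close> and \<open>\<lambda>(\<rho>\<^sub>k)\<close> depends only on the parity of \<open>k\<close>.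
  For odd \<open>n\<close> the parity of \<open>k\<close> is not determined by \<open>\<rho>\<^sub>k\<close>, so \<open>\<lambda>(\<rho>\<^sub>k)\<close> is constant and the
  dependences are the multiples of the sign (\<open>+1\<close> on rotations, \<open>-1\<close> on reflections). For even
  \<open>n\<close> the parity is well defined and the dependences form a plane, spanned by the signs
  restricted to elements of even and of odd index.\<close>

definition affine_perm :: "nat \<Rightarrow> int \<Rightarrow> int \<Rightarrow> nat \<Rightarrow> nat" where
  "affine_perm n e k i =
     (if i \<in> {1..n} then nat ((e * (int i - 1) + k) mod int n) + 1 else i)"

abbreviation rotation :: "nat \<Rightarrow> int \<Rightarrow> nat \<Rightarrow> nat" where
  "rotation n k \<equiv> affine_perm n 1 k"

abbreviation reflection :: "nat \<Rightarrow> int \<Rightarrow> nat \<Rightarrow> nat" where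
  "reflection n k \<equiv> affine_perm n (-1) k"

lemma affine_perm_apply:
  assumes "n > 0" "i \<in> {1..n}"
  shows "int (affine_perm n e k i) - 1 = (e * (int i - 1) + k) mod int n"
  using assms by (simp add: affine_perm_def)

lemma affine_perm_outside: "i \<notin> {1..n} \<Longrightarrow> affine_perm n e k i = i"
  unfolding affine_perm_def by (simp only: if_False)

lemma affine_perm_in_range:
  assumes "n > 0" "i \<in> {1..n}"
  shows "affine_perm n e k i \<in> {1..n}"
proof -
  have "nat ((e * (int i - 1) + k) mod int n) < n"
    using assms(1) by (simp add: nat_less_iff)
  then show ?thesis using assms(2) by (simp add: affine_perm_def)
qed

lemma affine_perm_mod: "affine_perm n e (k mod int n) = affine_perm n e k"
  by (rule ext) (simp add: affine_perm_def mod_simps)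

lemma affine_perm_cong: "k mod int n = k' mod int n \<Longrightarrow> affine_perm n e k = affine_perm n e k'"
  by (metis affine_perm_mod)

lemma affine_perm_comp:
  assumes n: "n > 0"
  shows "affine_perm n e k \<circ> affine_perm n e' k' = affine_perm n (e * e') (e * k' + k)"
proof
  fix i
  show "(affine_perm n e k \<circ> affine_perm n e' k') i = affine_perm n (e * e') (e * k' + k) i"
  proof (cases "i \<in> {1..n}")
    case True
    have gi: "int (affine_perm n e' k' i) - 1 = (e' * (int i - 1) + k') mod int n"
      by (rule affine_perm_apply[OF n True])
    have "int (affine_perm n e k (affine_perm n e' k' i)) - 1
        = (e * (int (affine_perm n e' k' i) - 1) + k) mod int n"
      by (rule affine_perm_apply[OF n affine_perm_in_range[OF n True]])
    also have "\<dots> = (e * ((e' * (int i - 1) + k') mod int n) + k) mod int n"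
      by (simp only: gi)
    also have "\<dots> = (e * (e' * (int i - 1) + k') + k) mod int n"
      by (rule mod_add_cong[OF _ refl]) (simp add: mod_mult_right_eq)
    also have "\<dots> = (e * e' * (int i - 1) + (e * k' + k)) mod int n"
      by (simp only: algebra_simps)
    also have "\<dots> = int (affine_perm n (e * e') (e * k' + k) i) - 1"
      by (rule affine_perm_apply[OF n True, symmetric])
    finally have "int (affine_perm n e k (affine_perm n e' k' i))
        = int (affine_perm n (e * e') (e * k' + k) i)" by linarith
    then show ?thesis by simp
  qed (simp add: affine_perm_outside)
qed

lemma rotation_zero: "n > 0 \<Longrightarrow> affine_perm n 1 0 = id"
  by (rule ext) (auto simp: affine_perm_def)

lemma rot_eq_rotation: "n > 0 \<Longrightarrow> rot n = rotation n 1"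
  by (rule ext) (simp add: rot_def affine_perm_def nat_mod_distrib)

lemma flip_eq_reflection: "n > 0 \<Longrightarrow> flip n = reflection n (-1)"
proof
  fix i assume n: "n > 0"
  show "flip n i = reflection n (-1) i"
  proof (cases "i \<in> {1..n}")
    case True
    have "(- int i) mod int n = (int n - int i) mod int n"
      by (simp add: mod_simps)
    also have "\<dots> = int n - int i"
      using True by (intro mod_pos_pos_trivial) auto
    finally have "(- int i) mod int n = int n - int i" .
    then show ?thesis using True by (simp add: flip_def affine_perm_def Suc_diff_le nat_diff_distrib)
  qed (auto simp: flip_def affine_perm_def)
qed

lemma affine_perm_in_dihedral:
  assumes n: "n > 0" and e: "e \<in> {1, -1}"
  shows "affine_perm n e k \<in> dihedral n"
proof -
  have rotation_nat: "rotation n (int t) \<in> dihedral n" for t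
  proof (induction t)
    case 0
    show ?case using rotation_zero[OF n] dihedral.id_in by (metis of_nat_0)
  next
    case (Suc t)
    have "rotation n (int (Suc t)) = rot n \<circ> rotation n (int t)"
      using affine_perm_comp[OF n, of 1 1 1 "int t"] rot_eq_rotation[OF n] by (simp add: add.commute)
    then show ?case using Suc dihedral.rot_in dihedral.comp_in by metis
  qed
  have rotation: "rotation n j \<in> dihedral n" for j
  proof -
    have "rotation n j = rotation n (int (nat (j mod int n)))"
      using n by (simp add: affine_perm_mod)
    then show ?thesis using rotation_nat by metis
  qed
  have "reflection n k = rotation n (k + 1) \<circ> flip n"
    using affine_perm_comp[OF n, of 1 "k + 1" "-1" "-1"] flip_eq_reflection[OF n] by simp
  then have "reflection n k \<in> dihedral n"
    using rotation dihedral.flip_in dihedral.comp_in by metis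
  then show ?thesis using e rotation by auto
qed

lemma dihedral_elem_affine_perm:
  assumes "g \<in> dihedral n" "n > 0"
  shows "\<exists>e k. e \<in> {1, -1} \<and> g = affine_perm n e k"
  using assms
proof (induction rule: dihedral.induct)
  case id_in
  show ?case using rotation_zero[OF id_in] by (intro exI[of _ 1] exI[of _ 0]) simp
next
  case rot_in
  show ?case using rot_eq_rotation[OF rot_in] by blast
next
  case flip_in
  show ?case using flip_eq_reflection[OF flip_in] by blast
next
  case (comp_in g h)
  then obtain e k e' k' where "e \<in> {1, -1}" "g = affine_perm n e k"
    and "e' \<in> {1, -1}" "h = affine_perm n e' k'" by blast
  then show ?case using affine_perm_comp[OF comp_in.prems]
    by (intro exI[of _ "e * e'"] exI[of _ "e * k' + k"]) auto
next
  case (inv_in g)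
  then obtain e k where e: "e \<in> {1, -1}" and g: "g = affine_perm n e k" by blast
  have "inv g = affine_perm n e (- e * k)"
    unfolding g using e
    by (intro inv_unique_comp) (auto simp: affine_perm_comp[OF inv_in.prems] rotation_zero[OF inv_in.prems])
  then show ?case using e by blast
qed

lemma dihedral_eq_image:
  assumes n: "n > 0"
  shows "dihedral n = (\<lambda>(e, k). affine_perm n e k) ` ({1, -1} \<times> {0..<int n})"
proof
  show "dihedral n \<subseteq> (\<lambda>(e, k). affine_perm n e k) ` ({1, -1} \<times> {0..<int n})"
  proof
    fix g assume "g \<in> dihedral n"
    then obtain e k where "e \<in> {1, -1}" "g = affine_perm n e (k mod int n)"
      using dihedral_elem_affine_perm n by (metis affine_perm_mod)
    moreover have "k mod int n \<in> {0..<int n}" using n by simp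
    ultimately show "g \<in> (\<lambda>(e, k). affine_perm n e k) ` ({1, -1} \<times> {0..<int n})" by force
  qed
  show "(\<lambda>(e, k). affine_perm n e k) ` ({1, -1} \<times> {0..<int n}) \<subseteq> dihedral n"
    using affine_perm_in_dihedral[OF n] by auto
qed

lemma affine_perm_eq_iff:
  assumes n: "n > 2" and e: "e \<in> {1, -1}" "e' \<in> {1, -1}"
  shows "affine_perm n e k = affine_perm n e' k' \<longleftrightarrow> e = e' \<and> k mod int n = k' mod int n"
proof
  assume eq: "affine_perm n e k = affine_perm n e' k'"
  have n0: "n > 0" and in1: "1 \<in> {1..n}" and in2: "2 \<in> {1..n}" using n by auto
  have "int (affine_perm n e k 1) - 1 = int (affine_perm n e' k' 1) - 1" using eq by simp
  then have k: "k mod int n = k' mod int n"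
    unfolding affine_perm_apply[OF n0 in1] by simp
  have "int (affine_perm n e k 2) - 1 = int (affine_perm n e' k' 2) - 1" using eq by simp
  then have "(e + k) mod int n = (e' + k') mod int n"
    unfolding affine_perm_apply[OF n0 in2] by simp
  then have "int n dvd (e + k) - (e' + k')" by (simp only: mod_eq_dvd_iff)
  moreover have "int n dvd k - k'" using k by (simp only: mod_eq_dvd_iff)
  ultimately have "int n dvd (e + k) - (e' + k') - (k - k')" by (rule dvd_diff)
  also have "(e + k) - (e' + k') - (k - k') = e - e'" by simp
  finally have "int n dvd e - e'" .
  moreover have "\<not> int n dvd 2" "\<not> int n dvd -2"
    using n zdvd_imp_le[of "int n" 2] by auto
  ultimately have "e = e'" using e by auto
  then show "e = e' \<and> k mod int n = k' mod int n"
    using k by simp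
next
  assume "e = e' \<and> k mod int n = k' mod int n"
  then show "affine_perm n e k = affine_perm n e' k'" by (metis affine_perm_mod)
qed

lemma inj_on_affine_perm:
  assumes "n > 2"
  shows "inj_on (\<lambda>(e, k). affine_perm n e k) ({1, -1} \<times> {0..<int n})"
  using affine_perm_eq_iff[OF assms] by (auto intro!: inj_onI)

lemma finite_dihedral: "n > 0 \<Longrightarrow> finite (dihedral n)"
  by (simp add: dihedral_eq_image)

lemma sum_dihedral:
  assumes n: "n > 2"
  shows "(\<Sum>g\<in>dihedral n. f g) =
    (\<Sum>k\<in>{0..<int n}. f (rotation n k)) + (\<Sum>k\<in>{0..<int n}. f (reflection n k))"
proof -
  have n0: "n > 0" using n by simp
  have "(\<Sum>g\<in>dihedral n. f g) = (\<Sum>(e, k)\<in>{1, -1} \<times> {0..<int n}. f (affine_perm n e k))"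
    unfolding dihedral_eq_image[OF n0] sum.reindex[OF inj_on_affine_perm[OF n]] by (simp add: case_prod_beta')
  also have "\<dots> = (\<Sum>e\<in>{1, -1}. \<Sum>k\<in>{0..<int n}. f (affine_perm n e k))"
    by (simp add: sum.cartesian_product)
  finally show ?thesis by simp
qed

lemma card_dihedral_filter:
  assumes n: "n > 2"
  shows "card {g\<in>dihedral n. P g} =
    card {k\<in>{0..<int n}. P (rotation n k)} + card {k\<in>{0..<int n}. P (reflection n k)}"
proof -
  have card_filter: "card {x\<in>A. Q x} = (\<Sum>x\<in>A. if Q x then 1 else 0)"
    if "finite A" for A :: "'a set" and Q
    unfolding card_eq_sum by (rule sum.inter_filter[OF that])
  have "finite (dihedral n)" using n by (simp add: finite_dihedral)
  then show ?thesis
    by (simp only: card_filter finite_atLeastLessThan_int sum_dihedral[OF n])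
qed

lemma affine_perm_apply_eq_iff:
  assumes n: "n > 0" and i: "i \<in> {1..n}" and j: "j \<in> {1..n}"
  shows "affine_perm n e k i = j \<longleftrightarrow> k mod int n = (int j - 1 - e * (int i - 1)) mod int n"
proof -
  have "(int j - 1) mod int n = int j - 1"
    using j by (intro mod_pos_pos_trivial) auto
  then have "affine_perm n e k i = j \<longleftrightarrow>
      (e * (int i - 1) + k) mod int n = (int j - 1) mod int n"
    using affine_perm_apply[OF n i, of e k] by auto
  also have "\<dots> \<longleftrightarrow> int n dvd (e * (int i - 1) + k) - (int j - 1)"
    by (rule mod_eq_dvd_iff)
  also have "(e * (int i - 1) + k) - (int j - 1) = k - (int j - 1 - e * (int i - 1))"
    by simp
  also have "int n dvd k - (int j - 1 - e * (int i - 1)) \<longleftrightarrow>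
      k mod int n = (int j - 1 - e * (int i - 1)) mod int n"
    by (rule mod_eq_dvd_iff[symmetric])
  finally show ?thesis .
qed

lemma sum_affine_perm_entry:
  assumes "n > 0" "i \<in> {1..n}" "j \<in> {1..n}"
  shows "(\<Sum>k\<in>{0..<int n}. lam (affine_perm n e k) * perm_entry (affine_perm n e k) i j)
    = lam (affine_perm n e (int j - 1 - e * (int i - 1)))"
proof -
  let ?c = "(int j - 1 - e * (int i - 1)) mod int n"
  have "(\<Sum>k\<in>{0..<int n}. lam (affine_perm n e k) * perm_entry (affine_perm n e k) i j)
      = (\<Sum>k\<in>{0..<int n}. if k = ?c then lam (affine_perm n e k) else 0)"
    by (rule sum.cong) (auto simp: perm_entry_def affine_perm_apply_eq_iff[OF assms])
  also have "\<dots> = lam (affine_perm n e ?c)"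
    using assms(1) by simp
  finally show ?thesis by (simp only: affine_perm_mod)
qed

lemma sum_dihedral_perm_entry:
  assumes "n > 2" "i \<in> {1..n}" "j \<in> {1..n}"
  shows "(\<Sum>g\<in>dihedral n. lam g * perm_entry g i j)
    = lam (rotation n (int j - int i)) + lam (reflection n (int i + int j - 2))"
proof -
  have "n > 0" using assms(1) by simp
  then show ?thesis
    using assms by (simp add: sum_dihedral sum_affine_perm_entry algebra_simps)
qed

lemma residue_index: "n > 0 \<Longrightarrow> \<exists>i\<in>{1..n}. int i - 1 = x mod int n"
  by (intro bexI[of _ "nat (x mod int n) + 1"]) (auto simp: Suc_le_eq nat_less_iff)

lemma dependences_iff:
  assumes n: "n > 2"
  shows "lam \<in> dependences n \<longleftrightarrow> (\<forall>g. g \<notin> dihedral n \<longrightarrow> lam g = 0) \<and>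
    (\<forall>x y. lam (rotation n (y - x)) + lam (reflection n (x + y)) = 0)"
proof -
  have n0: "n > 0" using n by simp
  have "(\<forall>i\<in>{1..n}. \<forall>j\<in>{1..n}. (\<Sum>g\<in>dihedral n. lam g * perm_entry g i j) = 0) \<longleftrightarrow>
      (\<forall>x y. lam (rotation n (y - x)) + lam (reflection n (x + y)) = 0)"
  proof
    assume entries: "\<forall>i\<in>{1..n}. \<forall>j\<in>{1..n}. (\<Sum>g\<in>dihedral n. lam g * perm_entry g i j) = 0"
    show "\<forall>x y. lam (rotation n (y - x)) + lam (reflection n (x + y)) = 0"
    proof (intro allI)
      fix x y :: int
      obtain i j where i: "i \<in> {1..n}" "int i - 1 = x mod int n"
        and j: "j \<in> {1..n}" "int j - 1 = y mod int n"
        using residue_index[OF n0] by meson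
      then have "int j - int i = y mod int n - x mod int n"
        and "int i + int j - 2 = x mod int n + y mod int n"
        by linarith+
      then have "rotation n (int j - int i) = rotation n (y - x)"
        and "reflection n (int i + int j - 2) = reflection n (x + y)"
        by (auto intro!: affine_perm_cong simp: mod_diff_eq mod_add_eq)
      moreover have "lam (rotation n (int j - int i)) + lam (reflection n (int i + int j - 2)) = 0"
        using entries i(1) j(1) sum_dihedral_perm_entry[OF n i(1) j(1), of lam] by simp
      ultimately show "lam (rotation n (y - x)) + lam (reflection n (x + y)) = 0" by simp
    qed
  next
    assume relations: "\<forall>x y. lam (rotation n (y - x)) + lam (reflection n (x + y)) = 0"
    show "\<forall>i\<in>{1..n}. \<forall>j\<in>{1..n}. (\<Sum>g\<in>dihedral n. lam g * perm_entry g i j) = 0"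
    proof (intro ballI)
      fix i j assume i: "i \<in> {1..n}" and j: "j \<in> {1..n}"
      have "(int j - 1) - (int i - 1) = int j - int i" "(int i - 1) + (int j - 1) = int i + int j - 2"
        by simp_all
      then show "(\<Sum>g\<in>dihedral n. lam g * perm_entry g i j) = 0"
        using relations sum_dihedral_perm_entry[OF n i j, of lam] by metis
    qed
  qed
  then show ?thesis unfolding dependences_def by blast
qed

lemma dependence_reflection:
  assumes "n > 2" "lam \<in> dependences n"
  shows "lam (reflection n k) = - lam (rotation n k)"
proof -
  have "lam (rotation n (k - 0)) + lam (reflection n (0 + k)) = 0"
    using assms dependences_iff by blast
  then show ?thesis by simp
qed

lemma dependence_rotation_parity:
  assumes n: "n > 2" and lam: "lam \<in> dependences n" and "even (k - k')"
  shows "lam (rotation n k) = lam (rotation n k')"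
proof -
  obtain t where "k - k' = 2 * t" using \<open>even (k - k')\<close> by (rule evenE)
  then have "(k' + t) - (- t) = k" "(- t) + (k' + t) = k'" by simp_all
  moreover have "lam (rotation n ((k' + t) - (- t))) + lam (reflection n ((- t) + (k' + t))) = 0"
    using lam dependences_iff[OF n] by blast
  ultimately show ?thesis using dependence_reflection[OF n lam] by simp
qed

text \<open>The function on \<open>D\<^sub>n\<close> with value \<open>r k\<close> at \<open>\<rho>\<^sub>k\<close> and \<open>s k\<close> at \<open>\<sigma>\<^sub>k\<close> for \<open>0 \<le> k < n\<close>
  (the index is recovered as \<open>g 1 - 1\<close>), and \<open>0\<close> outside \<open>D\<^sub>n\<close>.\<close>
definition dihedral_fun :: "nat \<Rightarrow> (int \<Rightarrow> real) \<Rightarrow> (int \<Rightarrow> real) \<Rightarrow> (nat \<Rightarrow> nat) \<Rightarrow> real" where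
  "dihedral_fun n r s g =
     (if g \<in> range (rotation n) then r (int (g 1) - 1)
      else if g \<in> range (reflection n) then s (int (g 1) - 1) else 0)"

lemma dihedral_fun_rotation: "n > 0 \<Longrightarrow> dihedral_fun n r s (rotation n k) = r (k mod int n)"
  by (simp add: dihedral_fun_def affine_perm_def)

lemma dihedral_fun_reflection: "n > 2 \<Longrightarrow> dihedral_fun n r s (reflection n k) = s (k mod int n)"
  using affine_perm_eq_iff[of n "-1" 1] by (auto simp: dihedral_fun_def affine_perm_def)

lemma dihedral_fun_outside: "n > 0 \<Longrightarrow> g \<notin> dihedral n \<Longrightarrow> dihedral_fun n r s g = 0"
  using affine_perm_in_dihedral by (auto simp: dihedral_fun_def)

lemma dihedral_fun_lincomb:
  "a * dihedral_fun n r s g + b * dihedral_fun n r' s' g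
    = dihedral_fun n (\<lambda>k. a * r k + b * r' k) (\<lambda>k. a * s k + b * s' k) g"
  by (simp add: dihedral_fun_def)

lemma dihedral_fun_scale: "a * dihedral_fun n r s g = dihedral_fun n (\<lambda>k. a * r k) (\<lambda>k. a * s k) g"
  by (simp add: dihedral_fun_def)

lemma dihedral_fun_in_dependences:
  assumes "n > 2" "\<And>x y. r ((y - x) mod int n) + s ((x + y) mod int n) = 0"
  shows "dihedral_fun n r s \<in> dependences n"
  using assms
  by (simp add: dependences_iff dihedral_fun_rotation dihedral_fun_reflection dihedral_fun_outside)

lemma dependence_eq_dihedral_fun:
  assumes n: "n > 2" and lam: "lam \<in> dependences n"
  shows "lam = dihedral_fun n (\<lambda>k. lam (rotation n k)) (\<lambda>k. lam (reflection n k))"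
proof
  fix g
  have n0: "n > 0" using n by simp
  show "lam g = dihedral_fun n (\<lambda>k. lam (rotation n k)) (\<lambda>k. lam (reflection n k)) g"
  proof (cases "g \<in> dihedral n")
    case True
    then obtain e k where "e = 1 \<or> e = -1" and g: "g = affine_perm n e k"
      using dihedral_elem_affine_perm[OF True n0] by blast
    then consider "g = rotation n k" | "g = reflection n k" by blast
    then show ?thesis
      by cases (simp_all only: dihedral_fun_rotation[OF n0] dihedral_fun_reflection[OF n] affine_perm_mod)
  next
    case False
    then show ?thesis using lam dependences_iff[OF n] dihedral_fun_outside[OF n0] by simp
  qed
qed

definition dihedral_sign :: "nat \<Rightarrow> (nat \<Rightarrow> nat) \<Rightarrow> real" where
  "dihedral_sign n = dihedral_fun n (\<lambda>_. 1) (\<lambda>_. -1)"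

lemma dependences_odd:
  assumes n: "n > 2" and "odd n"
  shows "dependences n = {(\<lambda>g. a * dihedral_sign n g) | a. True}"
proof (intro set_eqI iffI)
  fix lam assume lam: "lam \<in> dependences n"
  have rotation_const: "lam (rotation n k) = lam (rotation n 0)" for k
  proof (cases "even k")
    case True
    then show ?thesis using dependence_rotation_parity[OF n lam, of k 0] by simp
  next
    case False
    \<comment> \<open>\<open>\<rho>\<^sub>k = \<rho>\<^sub>k\<^sub>+\<^sub>n\<close>, and \<open>k + n\<close> is even\<close>
    then have "lam (rotation n (k + int n)) = lam (rotation n 0)"
      using \<open>odd n\<close> by (intro dependence_rotation_parity[OF n lam]) simp
    moreover have "rotation n (k + int n) = rotation n k" by (rule affine_perm_cong) simp
    ultimately show ?thesis by simp
  qed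
  have "(\<lambda>k. lam (rotation n k)) = (\<lambda>_. lam (rotation n 0))"
    and "(\<lambda>k. lam (reflection n k)) = (\<lambda>_. - lam (rotation n 0))"
    by (rule ext, metis rotation_const dependence_reflection[OF n lam])+
  then have "lam = dihedral_fun n (\<lambda>_. lam (rotation n 0)) (\<lambda>_. - lam (rotation n 0))"
    using dependence_eq_dihedral_fun[OF n lam] by (simp only:)
  also have "\<dots> = (\<lambda>g. lam (rotation n 0) * dihedral_sign n g)"
    by (simp add: dihedral_sign_def dihedral_fun_scale)
  finally show "lam \<in> {(\<lambda>g. a * dihedral_sign n g) | a. True}" by blast
next
  fix lam assume "lam \<in> {(\<lambda>g. a * dihedral_sign n g) | a. True}"
  then obtain a where "lam = dihedral_fun n (\<lambda>_. a) (\<lambda>_. - a)"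
    by (auto simp: dihedral_sign_def dihedral_fun_scale)
  then show "lam \<in> dependences n" using dihedral_fun_in_dependences[OF n] by simp
qed

lemma dihedral_sign_rotation: "n > 0 \<Longrightarrow> dihedral_sign n (rotation n k) = 1"
  by (simp add: dihedral_sign_def dihedral_fun_rotation)

lemma dihedral_sign_reflection: "n > 2 \<Longrightarrow> dihedral_sign n (reflection n k) = -1"
  by (simp add: dihedral_sign_def dihedral_fun_reflection)

lemma dihedral_sign_nonzero: "n > 0 \<Longrightarrow> dihedral_sign n \<noteq> (\<lambda>g. 0)"
  by (metis dihedral_sign_rotation zero_neq_one)

lemma dihedral_sign_values:
  assumes "n > 2"
  shows "\<forall>g\<in>dihedral n. dihedral_sign n g = 1 \<or> dihedral_sign n g = -1"
proof
  fix g assume "g \<in> dihedral n"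
  moreover have "n > 0" using assms by simp
  ultimately obtain e k where "e = 1 \<or> e = -1" "g = affine_perm n e k"
    using dihedral_elem_affine_perm by blast
  then show "dihedral_sign n g = 1 \<or> dihedral_sign n g = -1"
    using assms \<open>n > 0\<close> by (auto simp: dihedral_sign_rotation dihedral_sign_reflection)
qed

lemma card_dihedral_sign:
  assumes "n > 2"
  shows "card {g\<in>dihedral n. dihedral_sign n g = 1} = n"
    and "card {g\<in>dihedral n. dihedral_sign n g = -1} = n"
  using assms by (simp_all add: card_dihedral_filter dihedral_sign_rotation dihedral_sign_reflection
      del: atLeastLessThan_iff)

definition parity_dependence :: "nat \<Rightarrow> bool \<Rightarrow> (nat \<Rightarrow> nat) \<Rightarrow> real" where
  "parity_dependence n p = dihedral_fun n (\<lambda>k. of_bool (even k = p)) (\<lambda>k. - of_bool (even k = p))"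

lemma even_mod_iff: "even n \<Longrightarrow> even (k mod int n) \<longleftrightarrow> even k"
  by (simp add: dvd_mod_iff)

lemma parity_dependence_rotation:
  "n > 0 \<Longrightarrow> even n \<Longrightarrow> parity_dependence n p (rotation n k) = of_bool (even k = p)"
  by (simp add: parity_dependence_def dihedral_fun_rotation even_mod_iff)

lemma parity_dependence_reflection:
  "n > 2 \<Longrightarrow> even n \<Longrightarrow> parity_dependence n p (reflection n k) = - of_bool (even k = p)"
  by (simp add: parity_dependence_def dihedral_fun_reflection even_mod_iff)

lemma dependences_even:
  assumes n: "n > 2" and "even n"
  shows "dependences n =
    {(\<lambda>g. a * parity_dependence n True g + b * parity_dependence n False g) | a b. True}"
proof (intro set_eqI iffI)
  fix lam assume lam: "lam \<in> dependences n"
  define a where "a = lam (rotation n 0)"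
  define b where "b = lam (rotation n 1)"
  have "lam (rotation n k) = (if even k then a else b)" for k
    using dependence_rotation_parity[OF n lam, of k 0] dependence_rotation_parity[OF n lam, of k 1]
    by (simp add: a_def b_def)
  then have "(\<lambda>k. lam (rotation n k)) = (\<lambda>k. a * of_bool (even k) + b * of_bool (odd k))"
    and "(\<lambda>k. lam (reflection n k)) = (\<lambda>k. a * - of_bool (even k) + b * - of_bool (odd k))"
    by (simp_all add: dependence_reflection[OF n lam] fun_eq_iff)
  then have "lam = dihedral_fun n (\<lambda>k. a * of_bool (even k) + b * of_bool (odd k))
      (\<lambda>k. a * - of_bool (even k) + b * - of_bool (odd k))"
    using dependence_eq_dihedral_fun[OF n lam] by (simp only:)
  also have "\<dots> = (\<lambda>g. a * parity_dependence n True g + b * parity_dependence n False g)"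
    by (simp add: parity_dependence_def dihedral_fun_lincomb)
  finally show "lam \<in> {(\<lambda>g. a * parity_dependence n True g + b * parity_dependence n False g) | a b. True}"
    by blast
next
  fix lam
  assume "lam \<in> {(\<lambda>g. a * parity_dependence n True g + b * parity_dependence n False g) | a b. True}"
  then obtain a b :: real where "lam = dihedral_fun n
      (\<lambda>k. a * of_bool (even k) + b * of_bool (odd k))
      (\<lambda>k. a * - of_bool (even k) + b * - of_bool (odd k))"
    by (auto simp: parity_dependence_def dihedral_fun_lincomb)
  then show "lam \<in> dependences n"
    using \<open>even n\<close> by (auto intro!: dihedral_fun_in_dependences[OF n] simp: even_mod_iff)
qed

lemma card_even_below: "card {k\<in>{0..<2 * int m}. even k} = m"
proof -
  have "{k\<in>{0..<2 * int m}. even k} = (\<lambda>t. 2 * t) ` {0..<int m}"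
    by (auto elim!: evenE)
  moreover have "inj_on (\<lambda>t::int. 2 * t) {0..<int m}" by (auto intro: inj_onI)
  ultimately show ?thesis by (simp add: card_image)
qed

lemma card_odd_below: "card {k\<in>{0..<2 * int m}. odd k} = m"
proof -
  have "{k\<in>{0..<2 * int m}. odd k} = (\<lambda>t. 2 * t + 1) ` {0..<int m}"
    by (auto elim!: oddE)
  moreover have "inj_on (\<lambda>t::int. 2 * t + 1) {0..<int m}" by (auto intro: inj_onI)
  ultimately show ?thesis by (simp add: card_image)
qed

lemma parity_dependence_independent:
  assumes "n > 0" "even n"
  shows "\<forall>a b. (\<forall>g. a * parity_dependence n True g + b * parity_dependence n False g = 0)
    \<longrightarrow> a = 0 \<and> b = 0"
proof (intro allI impI)
  fix a b :: real
  assume "\<forall>g. a * parity_dependence n True g + b * parity_dependence n False g = 0"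
  from this[rule_format, of "rotation n 0"] this[rule_format, of "rotation n 1"]
  show "a = 0 \<and> b = 0" using assms by (simp add: parity_dependence_rotation)
qed

lemma parity_dependence_values:
  assumes "n > 2" "even n"
  shows "\<forall>g\<in>dihedral n.
    (parity_dependence n True g, parity_dependence n False g) \<in> {(1, 0), (-1, 0), (0, 1), (0, -1)}"
proof
  fix g assume "g \<in> dihedral n"
  moreover have "n > 0" using assms(1) by simp
  ultimately obtain e k where "e = 1 \<or> e = -1" and g: "g = affine_perm n e k"
    using dihedral_elem_affine_perm by blast
  then consider "g = rotation n k" | "g = reflection n k" by blast
  then show "(parity_dependence n True g, parity_dependence n False g) \<in> {(1, 0), (-1, 0), (0, 1), (0, -1)}"
    using assms \<open>n > 0\<close>
    by cases (simp_all add: parity_dependence_rotation parity_dependence_reflection)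
qed

lemma card_parity_dependence:
  assumes "n > 2" "even n" "v \<in> {(1, 0), (-1, 0), (0, 1), (0, -1)}"
  shows "card {g\<in>dihedral n. (parity_dependence n True g, parity_dependence n False g) = v} = n div 2"
proof -
  obtain m where "n = 2 * m" using assms(2) by blast
  with assms(3) show ?thesis
    using assms(1,2) by (elim insertE emptyE) (simp_all add: card_dihedral_filter
        parity_dependence_rotation parity_dependence_reflection card_even_below card_odd_below
        del: atLeastLessThan_iff)
qed

theorem lemma8:
  fixes n :: nat
  assumes "n > 2"
  shows "(odd n \<longrightarrow>
           (\<exists>c :: (nat \<Rightarrow> nat) \<Rightarrow> real.
              c \<noteq> (\<lambda>g. 0) \<and> dependences n = {(\<lambda>g. a * c g) | a. True} \<and>
              (\<forall>g\<in>dihedral n. c g = 1 \<or> c g = -1) \<and>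
              card {g\<in>dihedral n. c g = 1} = n \<and>
              card {g\<in>dihedral n. c g = -1} = n)) \<and>
         (even n \<longrightarrow>
           (\<exists>c1 c2 :: (nat \<Rightarrow> nat) \<Rightarrow> real.
              (\<forall>a b. (\<forall>g. a * c1 g + b * c2 g = 0) \<longrightarrow> a = 0 \<and> b = 0) \<and>
              dependences n = {(\<lambda>g. a * c1 g + b * c2 g) | a b. True} \<and>
              (\<forall>g\<in>dihedral n. (c1 g, c2 g) \<in> {(1,0), (-1,0), (0,1), (0,-1)}) \<and>
              card {g\<in>dihedral n. (c1 g, c2 g) = (1,0)} = n div 2 \<and>
              card {g\<in>dihedral n. (c1 g, c2 g) = (-1,0)} = n div 2 \<and>
              card {g\<in>dihedral n. (c1 g, c2 g) = (0,1)} = n div 2 \<and>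
              card {g\<in>dihedral n. (c1 g, c2 g) = (0,-1)} = n div 2))"
proof -
  have n0: "n > 0" using assms by simp
  show ?thesis
    apply (intro conjI impI)
    subgoal premises odd
      by (intro exI[of _ "dihedral_sign n"] conjI dihedral_sign_nonzero[OF n0]
          dependences_odd[OF assms odd] dihedral_sign_values[OF assms] card_dihedral_sign[OF assms])
    subgoal premises even
      by (intro exI[of _ "parity_dependence n True"] exI[of _ "parity_dependence n False"] conjI
          parity_dependence_independent[OF n0 even] dependences_even[OF assms even]
          parity_dependence_values[OF assms even] card_parity_dependence[OF assms even])
        simp_all
    done
qed

end
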